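(* Let $d\geqslant3$ be an integer and $\rho_0\in(0,1)$. Set $n_j=(d-1)d^j$ and $r_j=\rho_0^{1/n_j}$ for $j=0,1,2,\dots$, and define $\mu$ by $\mu(z)=(\bar z/|z|)^{n_j-2}$ for $r_j<|z|<r_{j+1}$, $j\geqslant0$, and $\mu(z)=0$ for $|z|<r_0$ and for $|z|>1$. Then: (i) $\mu=(z^d)^*\mu+\mu\cdot\chi_{A(r_0,r_1)}$; (ii) $\mathcal C\mu(z^d)=dz^{d-1}\mathcal C\mu(z)-\frac{2d}{d-1}[\rho_0^{1/d}-\rho_0]\,z$ for $|z|>1$; (iii) $\mathcal C\mu(z)=-\frac{2d}{d-1}[\rho_0^{1/d}-\rho_0]\,v(z)$ for $|z|>1$; (iv) $\mathcal{S}\mu(z)=-\frac{2d}{d-1}[\rho_0^{1/d}-\rho_0]\,v'(z)$ for $|z|>1$; where $v(z)=-\frac{z}{d}\sum_{n=0}^\infty\frac{z^{-(d-1)d^n}}{d^n}$ for $|z|>1$.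
   Context: $A(r,\rho)=\{r<|z|<\rho\}$. For $f(z)=z^d$, $(f^*\mu)(z)=\mu(f(z))\,\overline{f'(z)}/f'(z)$. $\mathcal C\mu(z)=\frac{1}{\pi}\int_{\mathbb{C}}\frac{\mu(\zeta)}{z-\zeta}\,dm(\zeta)$ is the Cauchy transform and $\mathcal{S}\mu(z)=-\frac{1}{\pi}\,\mathrm{p.v.}\int_{\mathbb{C}}\frac{\mu(w)}{(z-w)^2}\,dm(w)$ the Beurling transform. *)

theory Defs
  imports "HOL-Analysis.Analysis"
begin

definition annulus :: "real \<Rightarrow> real \<Rightarrow> complex set" where
  "annulus r \<rho> = {z. r < cmod z \<and> cmod z < \<rho>}"

text \<open>Pullback of a Beltrami coefficient under f(z) = z^d:
  (f^* mu)(z) = mu(f z) * conj(f' z) / f' z.\<close>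
definition pullback_pow :: "nat \<Rightarrow> (complex \<Rightarrow> complex) \<Rightarrow> complex \<Rightarrow> complex" where
  "pullback_pow d \<mu> z =
     \<mu> (z ^ d) * cnj (of_nat d * z ^ (d - 1)) / (of_nat d * z ^ (d - 1))"

definition cauchy_transform :: "(complex \<Rightarrow> complex) \<Rightarrow> complex \<Rightarrow> complex" where
  "cauchy_transform \<mu> z = of_real (1 / pi) * (\<integral>w. \<mu> w / (z - w) \<partial>lborel)"

definition beurling_transform :: "(complex \<Rightarrow> complex) \<Rightarrow> complex \<Rightarrow> complex" where
  "beurling_transform \<mu> z =
     of_real (- 1 / pi) *
       Lim (at_right 0)
         (\<lambda>\<epsilon>::real. (LINT w:{w. \<epsilon> < cmod (z - w)}|lborel. \<mu> w / (z - w)^2))"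

definition nseq :: "nat \<Rightarrow> nat \<Rightarrow> nat" where
  "nseq d j = (d - 1) * d ^ j"

definition rseq :: "nat \<Rightarrow> real \<Rightarrow> nat \<Rightarrow> real" where
  "rseq d \<rho>0 j = \<rho>0 powr (1 / real (nseq d j))"

text \<open>mu(z) = (conj z/|z|)^(n_j - 2) on r_j < |z| < r_{j+1}, and 0 elsewhere
  (the circles |z| = r_j and |z| = 1 are null sets; we put mu = 0 there).\<close>
definition mu :: "nat \<Rightarrow> real \<Rightarrow> complex \<Rightarrow> complex" where
  "mu d \<rho>0 z =
     (if \<exists>j. rseq d \<rho>0 j < cmod z \<and> cmod z < rseq d \<rho>0 (Suc j)
      then (cnj z / of_real (cmod z)) ^
             (nseq d (THE j. rseq d \<rho>0 j < cmod z \<and> cmod z < rseq d \<rho>0 (Suc j)) - 2)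
      else 0)"

definition vfun :: "nat \<Rightarrow> complex \<Rightarrow> complex" where
  "vfun d z = - (z / of_nat d) *
      (\<Sum>n. inverse (z ^ ((d - 1) * d ^ n)) / of_nat (d ^ n))"

end

theory Submission
  imports Defs
begin

text \<open>
  On the shell A(r_j, r_{j+1}) the coefficient \<mu> equals (conj w / |w|)^m with m = n_j - 2.
  For |z| > 1 the Cauchy and Beurling kernels are power series in w on the unit disc. Integrated
  against (conj w / |w|)^m over an annulus, every power except w^m vanishes by rotation invariance
  of Lebesgue measure, and w^m contributes the radial moment
  2\<pi> (r_{j+1}^{n_j} - r_j^{n_j}) / n_j = 2\<pi> (\<rho>0^{1/d} - \<rho>0) / n_j.
  Summed over the shells this is, term by term, -c times the series defining v and v': hence (iii)
  and (iv). Then (ii) follows from v(z^d) = d z^{d-1} v(z) + z, and (i) from z \<mapsto> z^d mapping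
  A(r_{j+1}, r_{j+2}) onto A(r_j, r_{j+1}), where the factor conj f' / f' = (conj z / |z|)^{2(d-1)}
  raises the exponent d (n_j - 2) to n_{j+1} - 2.
\<close>

section \<open>Rotation invariance of Lebesgue measure on the plane\<close>

lemma lborel_complex_eq_distr_pair:
  "distr lborel borel (\<lambda>p. Complex (fst p) (snd p)) = (lborel :: complex measure)"
proof (rule lborel_eqI[symmetric])
  have [measurable]: "(\<lambda>p::real \<times> real. Complex (fst p) (snd p)) \<in> borel_measurable borel"
    by (intro borel_measurable_continuous_onI continuous_intros)
  fix l u :: complex
  assume le: "\<And>b. b \<in> Basis \<Longrightarrow> l \<bullet> b \<le> u \<bullet> b"
  then have re: "Re l \<le> Re u" and im: "Im l \<le> Im u"
    using le[of 1] le[of \<i>] by (auto simp: Basis_complex_def)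
  have "(\<lambda>p. Complex (fst p) (snd p)) -` box l u = {Re l<..<Re u} \<times> {Im l<..<Im u}"
    by (auto simp: box_def Basis_complex_def)
  then have "emeasure (distr lborel borel (\<lambda>p. Complex (fst p) (snd p))) (box l u)
      = emeasure (lborel \<Otimes>\<^sub>M lborel) ({Re l<..<Re u} \<times> {Im l<..<Im u})"
    by (simp add: emeasure_distr lborel_prod)
  also have "\<dots> = (\<Prod>b\<in>Basis. (u - l) \<bullet> b)"
    using re im by (simp add: lborel.emeasure_pair_measure_Times Basis_complex_def ennreal_mult)
  finally show "emeasure (distr lborel borel (\<lambda>p. Complex (fst p) (snd p))) (box l u)
      = (\<Prod>b\<in>Basis. (u - l) \<bullet> b)" .
qed simp

lemma nn_integral_lborel_complex:
  fixes f :: "complex \<Rightarrow> ennreal"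
  assumes [measurable]: "f \<in> borel_measurable borel"
  shows "(\<integral>\<^sup>+w. f w \<partial>lborel) = (\<integral>\<^sup>+p. f (Complex (fst p) (snd p)) \<partial>lborel)"
proof -
  have [measurable]: "(\<lambda>p::real \<times> real. Complex (fst p) (snd p)) \<in> borel_measurable borel"
    by (intro borel_measurable_continuous_onI continuous_intros)
  show ?thesis
    by (subst lborel_complex_eq_distr_pair[symmetric]) (simp add: nn_integral_distr)
qed

lemma nn_integral_lborel_shear_fst:
  fixes f :: "real \<times> real \<Rightarrow> ennreal"
  assumes [measurable]: "f \<in> borel_measurable borel"
  shows "(\<integral>\<^sup>+p. f (fst p + t * snd p, snd p) \<partial>lborel) = (\<integral>\<^sup>+p. f p \<partial>lborel)"
proof -
  have [measurable]: "(\<lambda>p::real \<times> real. (fst p + t * snd p, snd p)) \<in> borel_measurable borel"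
    by (intro borel_measurable_continuous_onI continuous_intros)
  have "(\<integral>\<^sup>+p. f (fst p + t * snd p, snd p) \<partial>lborel)
      = (\<integral>\<^sup>+y. (\<integral>\<^sup>+x. f (x + t * y, y) \<partial>lborel) \<partial>lborel)"
    unfolding lborel_prod[symmetric] by (subst lborel_pair.nn_integral_snd[symmetric]) (simp_all add: lborel_prod)
  also have "\<dots> = (\<integral>\<^sup>+y. (\<integral>\<^sup>+x. f (x, y) \<partial>lborel) \<partial>lborel)"
  proof (rule nn_integral_cong)
    fix y
    show "(\<integral>\<^sup>+x. f (x + t * y, y) \<partial>lborel) = (\<integral>\<^sup>+x. f (x, y) \<partial>lborel)"
      using nn_integral_real_affine[of "\<lambda>x. f (x, y)" 1 "t * y"] by (simp add: add.commute)
  qed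
  also have "\<dots> = (\<integral>\<^sup>+p. f p \<partial>lborel)"
    unfolding lborel_prod[symmetric] by (subst lborel_pair.nn_integral_snd[symmetric]) (simp_all add: lborel_prod)
  finally show ?thesis .
qed

lemma nn_integral_lborel_shear_snd:
  fixes f :: "real \<times> real \<Rightarrow> ennreal"
  assumes [measurable]: "f \<in> borel_measurable borel"
  shows "(\<integral>\<^sup>+p. f (fst p, snd p + t * fst p) \<partial>lborel) = (\<integral>\<^sup>+p. f p \<partial>lborel)"
proof -
  have [measurable]: "(\<lambda>p::real \<times> real. (fst p, snd p + t * fst p)) \<in> borel_measurable borel"
    by (intro borel_measurable_continuous_onI continuous_intros)
  have "(\<integral>\<^sup>+p. f (fst p, snd p + t * fst p) \<partial>lborel)
      = (\<integral>\<^sup>+x. (\<integral>\<^sup>+y. f (x, y + t * x) \<partial>lborel) \<partial>lborel)"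
    unfolding lborel_prod[symmetric] by (subst lborel.nn_integral_fst[symmetric]) (simp_all add: lborel_prod)
  also have "\<dots> = (\<integral>\<^sup>+x. (\<integral>\<^sup>+y. f (x, y) \<partial>lborel) \<partial>lborel)"
  proof (rule nn_integral_cong)
    fix x
    show "(\<integral>\<^sup>+y. f (x, y + t * x) \<partial>lborel) = (\<integral>\<^sup>+y. f (x, y) \<partial>lborel)"
      using nn_integral_real_affine[of "\<lambda>y. f (x, y)" 1 "t * x"] by (simp add: add.commute)
  qed
  also have "\<dots> = (\<integral>\<^sup>+p. f p \<partial>lborel)"
    unfolding lborel_prod[symmetric] by (subst lborel.nn_integral_fst[symmetric]) (simp_all add: lborel_prod)
  finally show ?thesis .
qed

text \<open>A rotation other than the half turn factors into three shears (Paeth): with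
  t = sin \<theta> / (1 + cos \<theta>), multiplication by cis \<theta> is (x, y) \<mapsto> (x - t y, y), then
  (x, y) \<mapsto> (x, y + x sin \<theta>), then the first shear again.\<close>

lemma nn_integral_lborel_rotation:
  fixes f :: "complex \<Rightarrow> ennreal"
  assumes [measurable]: "f \<in> borel_measurable borel" and "norm \<zeta> = 1" "Re \<zeta> \<noteq> -1"
  shows "(\<integral>\<^sup>+w. f (\<zeta> * w) \<partial>lborel) = (\<integral>\<^sup>+w. f w \<partial>lborel)"
proof -
  define c s where "c = Re \<zeta>" and "s = Im \<zeta>"
  define t where "t = s / (1 + c)"
  have "1 + c \<noteq> 0" using assms(3) by (auto simp: c_def)
  have "c\<^sup>2 + s\<^sup>2 = 1" using assms(2) by (simp add: c_def s_def cmod_def)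
  then have ts: "t * s = 1 - c"
    using \<open>1 + c \<noteq> 0\<close> by (simp add: t_def field_simps power2_eq_square)
  have tc: "t * (1 + c) = s" using \<open>1 + c \<noteq> 0\<close> by (simp add: t_def)
  define shear1 where "shear1 h p = h (fst p + (-t) * snd p, snd p)"
    for h :: "real \<times> real \<Rightarrow> ennreal" and p
  define shear2 where "shear2 h p = h (fst p, snd p + s * fst p)"
    for h :: "real \<times> real \<Rightarrow> ennreal" and p
  define g where "g = (\<lambda>p. f (Complex (fst p) (snd p)))"
  have [measurable]: "g \<in> borel_measurable borel"
    unfolding g_def by (intro measurable_compose[OF _ assms(1)] borel_measurable_continuous_onI continuous_intros)
  have shear_measurable [measurable]:
    "shear1 h \<in> borel_measurable borel" "shear2 h \<in> borel_measurable borel"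
    if [measurable]: "h \<in> borel_measurable borel" for h
    unfolding shear1_def[abs_def] shear2_def[abs_def]
    by (intro measurable_compose[OF _ that] borel_measurable_continuous_onI continuous_intros)+
  have "f (\<zeta> * Complex x y) = shear1 (shear2 (shear1 g)) (x, y)" for x y
  proof -
    have "\<zeta> * Complex x y = Complex (x + (-t) * y + (-t) * (y + s * (x + (-t) * y))) (y + s * (x + (-t) * y))"
      unfolding complex_eq_iff using ts tc by (simp add: c_def[symmetric] s_def[symmetric]; algebra)
    then show ?thesis by (simp add: shear1_def shear2_def g_def)
  qed
  then have "(\<integral>\<^sup>+w. f (\<zeta> * w) \<partial>lborel) = (\<integral>\<^sup>+p. shear1 (shear2 (shear1 g)) p \<partial>lborel)"
    by (subst nn_integral_lborel_complex) simp_all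
  also have "\<dots> = (\<integral>\<^sup>+p. shear2 (shear1 g) p \<partial>lborel)"
    unfolding shear1_def[of "shear2 (shear1 g)"] by (rule nn_integral_lborel_shear_fst) simp
  also have "\<dots> = (\<integral>\<^sup>+p. shear1 g p \<partial>lborel)"
    unfolding shear2_def[of "shear1 g"] by (rule nn_integral_lborel_shear_snd) simp
  also have "\<dots> = (\<integral>\<^sup>+p. g p \<partial>lborel)"
    unfolding shear1_def by (rule nn_integral_lborel_shear_fst) simp
  also have "\<dots> = (\<integral>\<^sup>+w. f w \<partial>lborel)"
    unfolding g_def by (rule nn_integral_lborel_complex[symmetric]) simp
  finally show ?thesis .
qed

lemma distr_lborel_mult_unit:
  assumes "norm \<zeta> = 1"
  shows "distr lborel borel (\<lambda>w. \<zeta> * w) = (lborel :: complex measure)"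
proof -
  have [measurable]: "(\<lambda>w. \<eta> * w) \<in> borel_measurable borel" for \<eta> :: complex
    by (intro borel_measurable_continuous_onI continuous_intros)
  have rotation: "distr lborel borel (\<lambda>w. \<eta> * w) = (lborel :: complex measure)"
    if "norm \<eta> = 1" "Re \<eta> \<noteq> -1" for \<eta>
  proof (rule measure_eqI)
    fix A :: "complex set" assume "A \<in> sets (distr lborel borel (\<lambda>w. \<eta> * w))"
    then have [measurable]: "A \<in> sets borel" by simp
    have "emeasure (distr lborel borel (\<lambda>w. \<eta> * w)) A = (\<integral>\<^sup>+w. indicator A w \<partial>distr lborel borel (\<lambda>w. \<eta> * w))"
      by simp
    also have "\<dots> = (\<integral>\<^sup>+w. indicator A (\<eta> * w) \<partial>lborel)"
      by (rule nn_integral_distr) simp_all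
    also have "\<dots> = emeasure lborel A"
      using nn_integral_lborel_rotation[OF _ that, of "indicator A"] by simp
    finally show "emeasure (distr lborel borel (\<lambda>w. \<eta> * w)) A = emeasure lborel A" .
  qed simp
  show ?thesis
  proof (cases "Re \<zeta> = -1")
    case True
    then have "\<zeta> = \<i> * \<i>"
      using assms by (simp add: complex_eq_iff cmod_def power2_eq_square)
    then have "(\<lambda>w. \<i> * w) \<circ> (\<lambda>w. \<i> * w) = (\<lambda>w. \<zeta> * w)"
      by (simp add: comp_def mult.assoc)
    then have "distr (distr lborel borel (\<lambda>w. \<i> * w)) borel (\<lambda>w. \<i> * w)
        = distr lborel borel (\<lambda>w. \<zeta> * w)"
      by (subst distr_distr) simp_all
    then show ?thesis by (simp add: rotation)
  qed (use assms rotation in auto)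
qed

lemma integral_lborel_mult_unit:
  fixes g :: "complex \<Rightarrow> 'a::{banach, second_countable_topology}"
  assumes [measurable]: "g \<in> borel_measurable borel" and "norm \<zeta> = 1"
  shows "(\<integral>w. g (\<zeta> * w) \<partial>lborel) = (\<integral>w. g w \<partial>lborel)"
proof -
  have [measurable]: "(\<lambda>w. \<zeta> * w) \<in> borel_measurable borel"
    by (intro borel_measurable_continuous_onI continuous_intros)
  have "(\<integral>w. g (\<zeta> * w) \<partial>lborel) = (\<integral>w. g w \<partial>distr lborel borel (\<lambda>w. \<zeta> * w))"
    by (rule integral_distr[symmetric]) simp_all
  then show ?thesis by (simp add: distr_lborel_mult_unit[OF assms(2)])
qed

section \<open>Radial integrals over discs and annuli\<close>

lemma emeasure_lborel_complex_ball: "0 \<le> r \<Longrightarrow> emeasure lborel (ball (0::complex) r) = ennreal (pi * r\<^sup>2)"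
  by (simp add: emeasure_ball unit_ball_vol_2)

lemma emeasure_lborel_complex_shell:
  assumes "0 \<le> t" "t \<le> s"
  shows "emeasure lborel {w::complex. t \<le> norm w \<and> norm w < s} = ennreal (pi * (s\<^sup>2 - t\<^sup>2))"
proof -
  have "{w::complex. t \<le> norm w \<and> norm w < s} = ball 0 s - ball 0 t" by auto
  moreover have "emeasure lborel (ball (0::complex) s - ball 0 t)
      = emeasure lborel (ball (0::complex) s) - emeasure lborel (ball (0::complex) t)"
    using assms by (intro emeasure_Diff) (auto simp: emeasure_lborel_complex_ball)
  ultimately show ?thesis
    using assms by (simp add: emeasure_lborel_complex_ball ennreal_minus power_mono algebra_simps)
qed

lemma nn_integral_radial_profile:
  assumes "0 \<le> s" "1 \<le> m"
  shows "(\<integral>\<^sup>+t. ennreal (pi * real m * t^(m-1) * (s\<^sup>2 - t\<^sup>2)) * indicator {0..s} t \<partial>lborel)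
    = ennreal (2 * pi * s^(m+2) / (m+2))"
proof -
  obtain k where k: "m = Suc k" using assms(2) by (cases m) auto
  define F where "F t = pi * (s\<^sup>2 * t^m - real m / (m+2) * t^(m+2))" for t
  have "(F has_real_derivative pi * real m * t^(m-1) * (s\<^sup>2 - t\<^sup>2)) (at t)" for t
  proof -
    have "(F has_real_derivative pi * (s\<^sup>2 * (real m * t^(m-1)) - real m / (m+2) * (real (m+2) * t^(m+1)))) (at t)"
      unfolding F_def using DERIV_pow[of m t] DERIV_pow[of "m+2" t]
      by (intro DERIV_cmult DERIV_diff) simp_all
    moreover have "pi * (s\<^sup>2 * (real m * t^(m-1)) - real m / (m+2) * (real (m+2) * t^(m+1)))
        = pi * real m * t^(m-1) * (s\<^sup>2 - t\<^sup>2)"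
      by (simp add: k power2_eq_square field_simps)
    ultimately show ?thesis by (simp only:)
  qed
  moreover have "0 \<le> pi * real m * t^(m-1) * (s\<^sup>2 - t\<^sup>2)" if "t \<in> {0..s}" for t
    using that by (simp add: power_mono)
  ultimately have "(\<integral>\<^sup>+t. ennreal (pi * real m * t^(m-1) * (s\<^sup>2 - t\<^sup>2)) * indicator {0..s} t \<partial>lborel)
      = ennreal (F s - F 0)"
    using assms by (intro nn_integral_FTC_Icc) auto
  also have "F s - F 0 = 2 * pi * s^(m+2) / (m+2)"
    by (simp add: F_def k field_simps power2_eq_square)
  finally show ?thesis .
qed

text \<open>Tonelli applied to |w|^m = \<integral>_0^{|w|} m t^{m-1} dt.\<close>

lemma nn_integral_ball_norm_power_layers:
  assumes "1 \<le> m"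
  shows "(\<integral>\<^sup>+w. ennreal (indicator (ball (0::complex) s) w * norm w ^ m) \<partial>lborel)
    = (\<integral>\<^sup>+t. ennreal (real m * t^(m-1)) * emeasure lborel {w::complex. t \<le> norm w \<and> norm w < s}
        * indicator {0..s} t \<partial>lborel)"
proof -
  define S where "S = {p::complex \<times> real. 0 \<le> snd p \<and> snd p \<le> norm (fst p)}"
  define h where "h p = ennreal (real m * snd p ^ (m-1)) * indicator S p * indicator (ball 0 s) (fst p)"
    for p :: "complex \<times> real"
  have "closed S" unfolding S_def by (intro closed_Collect_conj closed_Collect_le continuous_intros)
  then have [measurable]: "S \<in> sets borel" by simp
  have [measurable]: "ball (0::complex) s \<in> sets borel" by simp
  have [measurable]: "fst \<in> borel_measurable (borel :: (complex \<times> real) measure)"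
    "snd \<in> borel_measurable (borel :: (complex \<times> real) measure)"
    by (intro borel_measurable_continuous_onI continuous_intros)+
  have "ennreal (indicator (ball (0::complex) s) w * norm w ^ m) = (\<integral>\<^sup>+t. h (w, t) \<partial>lborel)" for w
  proof -
    have "(\<integral>\<^sup>+t. ennreal (real m * t^(m-1)) * indicator {0..norm w} t \<partial>lborel) = ennreal (norm w ^ m)"
      using assms by (subst nn_integral_FTC_Icc[where F="\<lambda>t. t^m"]) (auto intro!: derivative_eq_intros)
    then show ?thesis
      by (auto simp: h_def S_def nn_integral_multc indicator_def cong: nn_integral_cong)
  qed
  then have "(\<integral>\<^sup>+w. ennreal (indicator (ball (0::complex) s) w * norm w ^ m) \<partial>lborel)
      = (\<integral>\<^sup>+w. (\<integral>\<^sup>+t. h (w, t) \<partial>lborel) \<partial>lborel)"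
    by simp
  also have "\<dots> = (\<integral>\<^sup>+t. (\<integral>\<^sup>+w. h (w, t) \<partial>lborel) \<partial>lborel)"
    by (rule lborel_pair.Fubini[symmetric]) (simp add: h_def[abs_def] lborel_prod)
  also have "\<dots> = (\<integral>\<^sup>+t. ennreal (real m * t^(m-1)) * emeasure lborel {w::complex. t \<le> norm w \<and> norm w < s}
      * indicator {0..s} t \<partial>lborel)"
  proof (rule nn_integral_cong)
    fix t :: real
    have "h (w, t) = ennreal (real m * t^(m-1)) * indicator {0..s} t
        * indicator {w::complex. t \<le> norm w \<and> norm w < s} w" for w
      by (auto simp: h_def S_def indicator_def)
    then show "(\<integral>\<^sup>+w. h (w, t) \<partial>lborel) = ennreal (real m * t^(m-1))
        * emeasure lborel {w::complex. t \<le> norm w \<and> norm w < s} * indicator {0..s} t"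
      by (simp add: nn_integral_cmult nn_integral_multc ac_simps)
  qed
  finally show ?thesis .
qed

lemma nn_integral_ball_norm_power:
  assumes "0 \<le> s"
  shows "(\<integral>\<^sup>+w. ennreal (indicator (ball (0::complex) s) w * norm w ^ m) \<partial>lborel)
    = ennreal (2 * pi * s^(m+2) / (m+2))"
proof (cases "m = 0")
  case True
  then show ?thesis
    using assms by (simp add: emeasure_lborel_complex_ball ennreal_indicator power2_eq_square)
next
  case False
  then have "1 \<le> m" by simp
  have layer: "ennreal (real m * t^(m-1)) * emeasure lborel {w::complex. t \<le> norm w \<and> norm w < s} * indicator {0..s} t
      = ennreal (pi * real m * t^(m-1) * (s\<^sup>2 - t\<^sup>2)) * indicator {0..s} t" for t
    by (cases "0 \<le> t \<and> t \<le> s")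
      (simp_all add: emeasure_lborel_complex_shell ennreal_mult[symmetric] power_mono)
  show ?thesis
    unfolding nn_integral_ball_norm_power_layers[OF \<open>1 \<le> m\<close>] layer
    by (rule nn_integral_radial_profile[OF assms \<open>1 \<le> m\<close>])
qed

lemma has_bochner_integral_ball_norm_power:
  assumes "0 \<le> s"
  shows "has_bochner_integral lborel (\<lambda>w::complex. indicator (ball 0 s) w * norm w ^ m)
    (2 * pi * s^(m+2) / (m+2))"
proof (rule has_bochner_integral_nn_integral)
  have [measurable]: "ball (0::complex) s \<in> sets borel" by simp
  show "(\<lambda>w::complex. indicator (ball 0 s) w * norm w ^ m) \<in> borel_measurable lborel"
    by (simp only: measurable_lborel2) measurable
qed (use assms nn_integral_ball_norm_power in auto)

lemma open_annulus: "open (annulus a b)"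
proof -
  have "annulus a b = norm -` {a<..<b}" by (auto simp: annulus_def)
  then show ?thesis by (simp add: open_vimage continuous_on_norm_id)
qed

lemma annulus_in_borel [measurable]: "annulus a b \<in> sets borel"
  by (simp add: open_annulus)

lemma emeasure_annulus_finite: "emeasure lborel (annulus a b) < \<infinity>"
proof (rule emeasure_bounded_finite)
  show "bounded (annulus a b)"
    by (rule bounded_subset[OF bounded_ball[of 0 b]]) (auto simp: annulus_def)
qed

lemma AE_lborel_norm_neq: "AE w in lborel. norm (w::complex) \<noteq> r"
proof (rule AE_I')
  show "sphere (0::complex) r \<in> null_sets lborel"
    using negligible_sphere[of 0 r] by (simp add: negligible_iff_null_sets null_sets_completion_iff)
qed auto

lemma has_bochner_integral_annulus_norm_power:
  assumes "0 \<le> a" "a \<le> b"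
  shows "has_bochner_integral lborel (\<lambda>w::complex. indicator (annulus a b) w * norm w ^ m)
    (2 * pi * (b^(m+2) - a^(m+2)) / (m+2))"
proof -
  have "has_bochner_integral lborel
      (\<lambda>w::complex. indicator (ball 0 b) w * norm w ^ m - indicator (ball 0 a) w * norm w ^ m)
      (2 * pi * b^(m+2) / (m+2) - 2 * pi * a^(m+2) / (m+2))"
    using assms by (intro has_bochner_integral_diff has_bochner_integral_ball_norm_power) auto
  moreover have "AE w in lborel. indicator (ball 0 b) w * norm w ^ m - indicator (ball 0 a) w * norm w ^ m
      = indicator (annulus a b) w * norm (w::complex) ^ m"
    using AE_lborel_norm_neq[of a]
    by eventually_elim (use assms in \<open>auto simp: indicator_def annulus_def\<close>)
  moreover have [measurable]: "ball (0::complex) r \<in> sets borel" for r by simp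
  ultimately show ?thesis
    by (subst (asm) has_bochner_integral_cong_AE) (simp_all add: diff_divide_distrib right_diff_distrib)
qed

lemma measure_annulus:
  assumes "0 \<le> a" "a \<le> b"
  shows "measure lborel (annulus a b) = pi * (b\<^sup>2 - a\<^sup>2)"
  using has_bochner_integral_integral_eq[OF has_bochner_integral_annulus_norm_power[OF assms, of 0]]
    emeasure_annulus_finite[of a b]
  by (simp add: power2_eq_square)

section \<open>Integrating power series against annular monomials\<close>

lemma
  fixes f :: "'a \<Rightarrow> 'b::{banach, second_countable_topology}"
  assumes [measurable]: "f \<in> borel_measurable M" "A \<in> sets M" and "emeasure M A < \<infinity>"
    and bound: "\<And>x. norm (f x) \<le> C * indicator A x"
  shows integrable_indicator_bound: "integrable M f"
    and integral_norm_le_indicator_bound: "(\<integral>x. norm (f x) \<partial>M) \<le> C * measure M A"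
proof -
  have "f x = 0" if "x \<notin> A" for x using bound[of x] that by simp
  moreover have "norm (f x) \<le> C" if "x \<in> A" for x using bound[of x] that by simp
  ultimately show "integrable M f"
    using assms(3) by (intro integrableI_bounded_set[where A = A and B = C]) auto
  then have "(\<integral>x. norm (f x) \<partial>M) \<le> (\<integral>x. C * indicator A x \<partial>M)"
    using assms(3) bound by (intro integral_mono integrable_mult_right integrable_real_indicator) auto
  then show "(\<integral>x. norm (f x) \<partial>M) \<le> C * measure M A" using assms(3) by simp
qed

text \<open>In polar coordinates w = s cis \<theta>, \<open>annular_monomial a b m k w\<close> is s^k cis ((k - m) \<theta>)
  on the annulus a < s < b and 0 elsewhere.\<close>

definition annular_monomial :: "real \<Rightarrow> real \<Rightarrow> nat \<Rightarrow> nat \<Rightarrow> complex \<Rightarrow> complex" where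
  "annular_monomial a b m k w = indicator (annulus a b) w * (cnj w / of_real (cmod w)) ^ m * w ^ k"

lemma annular_monomial_measurable [measurable]: "annular_monomial a b m k \<in> borel_measurable borel"
proof -
  have [measurable]: "cnj \<in> borel_measurable borel" "(\<lambda>w. of_real (cmod w) :: complex) \<in> borel_measurable borel"
    "(\<lambda>w. w ^ k :: complex) \<in> borel_measurable borel"
    by (intro borel_measurable_continuous_onI continuous_intros)+
  show ?thesis unfolding annular_monomial_def[abs_def] by measurable
qed

lemma norm_annular_monomial_le:
  assumes "0 \<le> b"
  shows "norm (annular_monomial a b m k w) \<le> b ^ k * indicator (annulus a b) w"
proof (cases "w \<in> annulus a b")
  case True
  have "norm (cnj w / of_real (cmod w)) \<le> 1"
    by (cases "w = 0") (simp_all add: norm_divide)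
  then have "norm ((cnj w / of_real (cmod w)) ^ m) \<le> 1"
    by (simp add: norm_power power_le_one)
  moreover have "norm w ^ k \<le> b ^ k"
    using True by (intro power_mono) (auto simp: annulus_def)
  ultimately have "norm ((cnj w / of_real (cmod w)) ^ m) * norm w ^ k \<le> 1 * b ^ k"
    by (intro mult_mono) auto
  then show ?thesis
    using True by (simp add: annular_monomial_def norm_mult norm_power)
qed (simp add: annular_monomial_def)

lemma annular_monomial_rotate:
  assumes "norm \<zeta> = 1"
  shows "annular_monomial a b m k (\<zeta> * w) = cnj \<zeta> ^ m * \<zeta> ^ k * annular_monomial a b m k w"
proof -
  have norm_eq: "norm (\<zeta> * w) = norm w" using assms by (simp add: norm_mult)
  then have "cnj (\<zeta> * w) / of_real (cmod (\<zeta> * w)) = cnj \<zeta> * (cnj w / of_real (cmod w))"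
    by simp
  moreover have "indicator (annulus a b) (\<zeta> * w) = (indicator (annulus a b) w :: complex)"
    using norm_eq by (simp add: annulus_def indicator_def)
  ultimately show ?thesis
    unfolding annular_monomial_def by (simp only: power_mult_distrib mult_ac)
qed

lemma integral_annular_monomial_off_diagonal:
  assumes "k \<noteq> m"
  shows "integral\<^sup>L lborel (annular_monomial a b m k) = 0"
proof -
  define q :: int where "q = int k - int m"
  define \<zeta> where "\<zeta> = cis (pi / q)"
  have "q \<noteq> 0" using assms by (simp add: q_def)
  have "cnj \<zeta> ^ m * \<zeta> ^ k = cis (real m * - (pi / q)) * cis (real k * (pi / q))"
    unfolding \<zeta>_def cis_cnj by (simp only: Complex.DeMoivre)
  also have "\<dots> = cis (of_int q * (pi / q))"
    by (simp add: cis_mult q_def algebra_simps diff_divide_distrib)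
  also have "\<dots> = -1" using \<open>q \<noteq> 0\<close> by simp
  finally have factor: "cnj \<zeta> ^ m * \<zeta> ^ k = -1" .
  have "integral\<^sup>L lborel (annular_monomial a b m k) = (\<integral>w. annular_monomial a b m k (\<zeta> * w) \<partial>lborel)"
    by (rule integral_lborel_mult_unit[symmetric]) (simp_all add: \<zeta>_def)
  also have "\<dots> = - integral\<^sup>L lborel (annular_monomial a b m k)"
    using factor by (simp add: annular_monomial_rotate \<zeta>_def del: cis_cnj)
  finally show ?thesis by simp
qed

lemma integral_annular_monomial_diagonal:
  assumes "0 \<le> a" "a \<le> b"
  shows "integral\<^sup>L lborel (annular_monomial a b m m) = of_real (2 * pi * (b^(m+2) - a^(m+2)) / (m+2))"
proof -
  have eq: "annular_monomial a b m m w = of_real (indicator (annulus a b) w * norm w ^ m)" for w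
  proof (cases "w = 0")
    case False
    have "(cnj w / of_real (cmod w)) ^ m * w ^ m = (cnj w * w) ^ m / of_real (cmod w) ^ m"
      by (simp add: power_divide power_mult_distrib)
    also have "\<dots> = of_real (cmod w ^ m)"
      using False by (simp add: mult.commute[of "cnj w"] complex_norm_square[symmetric] power_mult_distrib
          power2_eq_square)
    finally show ?thesis by (simp add: annular_monomial_def mult.assoc indicator_def)
  qed (use assms in \<open>simp add: annular_monomial_def annulus_def\<close>)
  have "integral\<^sup>L lborel (annular_monomial a b m m)
      = of_real (\<integral>w. indicator (annulus a b) w * norm w ^ m \<partial>lborel)"
    unfolding eq by (rule integral_complex_of_real)
  then show ?thesis
    using has_bochner_integral_integral_eq[OF has_bochner_integral_annulus_norm_power[OF assms]]
    by simp
qed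

lemma
  fixes f :: "nat \<Rightarrow> 'a \<Rightarrow> 'b::{banach, second_countable_topology}"
  assumes "\<And>i. f i \<in> borel_measurable M" "\<And>i. A i \<in> sets M" "\<And>i. emeasure M (A i) < \<infinity>"
    and bound: "\<And>i x. norm (f i x) \<le> C i * indicator (A i) x"
    and sums: "\<And>x. (\<lambda>i. f i x) sums g x"
    and summable_norm: "\<And>x. summable (\<lambda>i. norm (f i x))"
    and summable_bound: "summable (\<lambda>i. C i * measure M (A i))"
  shows integrable_sums_limit: "integrable M g"
    and sums_integral_sums_limit: "(\<lambda>i. integral\<^sup>L M (f i)) sums integral\<^sup>L M g"
proof -
  have g_eq: "g = (\<lambda>x. \<Sum>i. f i x)" using sums by (auto simp: fun_eq_iff sums_iff)
  have "integrable M (f i)" for i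
    using assms(1-3) bound by (rule integrable_indicator_bound)
  moreover have "summable (\<lambda>i. \<integral>x. norm (f i x) \<partial>M)"
    using integral_norm_le_indicator_bound[OF assms(1-3) bound]
    by (intro summable_comparison_test'[OF summable_bound, of 0]) auto
  ultimately show "integrable M g" "(\<lambda>i. integral\<^sup>L M (f i)) sums integral\<^sup>L M g"
    unfolding g_eq using summable_norm by (auto intro!: integrable_suminf sums_integral)
qed

lemma has_bochner_integral_annulus_power_series:
  fixes c :: "nat \<Rightarrow> complex" and K :: "complex \<Rightarrow> complex"
  assumes ab: "0 \<le> a" "a \<le> b"
    and K: "\<And>w. norm w < b \<Longrightarrow> (\<lambda>k. c k * w ^ k) sums K w"
    and summable_c: "summable (\<lambda>k. norm (c k) * b ^ k)"
  shows "has_bochner_integral lborel (\<lambda>w. indicator (annulus a b) w * (cnj w / of_real (cmod w)) ^ m * K w)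
    (c m * of_real (2 * pi * (b^(m+2) - a^(m+2)) / (m+2)))"
proof -
  define f where "f k w = c k * annular_monomial a b m k w" for k w
  define g where "g w = indicator (annulus a b) w * (cnj w / of_real (cmod w)) ^ m * K w" for w
  have "0 \<le> b" using ab by simp
  have measurable: "f k \<in> borel_measurable lborel" for k
    unfolding f_def[abs_def] by measurable
  have bound: "norm (f k w) \<le> norm (c k) * b ^ k * indicator (annulus a b) w" for k w
    using norm_annular_monomial_le[OF \<open>0 \<le> b\<close>, of a m k w]
    by (simp add: f_def norm_mult mult.assoc mult_left_mono)
  have sums: "(\<lambda>k. f k w) sums g w" for w
  proof (cases "w \<in> annulus a b")
    case True
    then have "norm w < b" by (simp add: annulus_def)
    from sums_mult[OF K[OF this], of "(cnj w / of_real (cmod w)) ^ m"] show ?thesis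
      using True by (simp add: f_def g_def annular_monomial_def mult_ac)
  qed (simp add: f_def g_def annular_monomial_def)
  have summable_norm: "summable (\<lambda>k. norm (f k w))" for w
    using bound by (intro summable_comparison_test'[OF summable_mult2[OF summable_c], of 0]) auto
  note series = measurable _ emeasure_annulus_finite bound sums summable_norm
    summable_mult2[OF summable_c, of "measure lborel (annulus a b)"]
  have "integral\<^sup>L lborel (f k)
      = (if k = m then c m * of_real (2 * pi * (b^(m+2) - a^(m+2)) / (m+2)) else 0)" for k
    unfolding f_def using integral_annular_monomial_off_diagonal[of k m a b]
      integral_annular_monomial_diagonal[OF ab, of m] by auto
  then have "(\<lambda>k. integral\<^sup>L lborel (f k)) sums (c m * of_real (2 * pi * (b^(m+2) - a^(m+2)) / (m+2)))"
    using sums_single[of m "\<lambda>_. c m * of_real (2 * pi * (b^(m+2) - a^(m+2)) / (m+2))"] by simp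
  then show ?thesis
    using integrable_sums_limit[OF series] sums_integral_sums_limit[OF series]
    by (simp add: has_bochner_integral_iff g_def[abs_def] sums_unique2)
qed

lemma cauchy_kernel_sums:
  fixes z w :: "'a::{real_normed_field, banach}"
  assumes "norm w < norm z"
  shows "(\<lambda>k. 1 / z ^ Suc k * w ^ k) sums (1 / (z - w))"
proof -
  have "z \<noteq> 0" "z - w \<noteq> 0" using assms by auto
  moreover have "norm (w / z) < 1" using assms by (simp add: norm_divide divide_simps)
  ultimately show ?thesis
    using sums_mult[OF geometric_sums[of "w / z"], of "1 / z"]
    by (simp add: power_divide field_simps)
qed

lemma beurling_kernel_sums:
  fixes z w :: "'a::{real_normed_field, banach}"
  assumes "norm w < norm z"
  shows "(\<lambda>k. of_nat (Suc k) / z ^ (k + 2) * w ^ k) sums (1 / (z - w)\<^sup>2)"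
proof -
  have "z \<noteq> 0" "z - w \<noteq> 0" using assms by auto
  moreover have "norm (w / z) < 1" using assms by (simp add: norm_divide divide_simps)
  ultimately show ?thesis
    using sums_mult[OF geometric_deriv_sums[of "w / z"], of "1 / z\<^sup>2"]
    by (simp add: power_divide field_simps power2_eq_square)
qed

lemma summable_cauchy_kernel_coeffs:
  fixes z :: complex
  assumes "0 \<le> b" "b < norm z"
  shows "summable (\<lambda>k. norm (1 / z ^ Suc k) * b ^ k)"
  using cauchy_kernel_sums[of b "norm z"] assms by (simp add: sums_iff norm_divide norm_power norm_mult)

lemma summable_beurling_kernel_coeffs:
  fixes z :: complex
  assumes "0 \<le> b" "b < norm z"
  shows "summable (\<lambda>k. norm (of_nat (Suc k) / z ^ (k + 2)) * b ^ k)"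
proof -
  have "norm (of_nat (Suc k) / z ^ (k + 2)) = real (Suc k) / norm z ^ (k + 2)" for k
    by (simp only: norm_divide norm_of_nat norm_power)
  then show ?thesis
    using beurling_kernel_sums[of b "norm z"] assms by (simp add: sums_iff)
qed

lemma norm_cauchy_kernel_le:
  fixes z w :: complex
  assumes "norm w < 1" "1 < norm z"
  shows "norm (1 / (z - w)) \<le> 1 / (norm z - 1)"
proof -
  have "norm z - 1 \<le> norm (z - w)" using assms norm_triangle_ineq2[of z w] by linarith
  then show ?thesis using assms by (simp add: norm_divide divide_simps)
qed

lemma beurling_transform_eq_integral:
  assumes "\<And>w. 1 \<le> cmod w \<Longrightarrow> \<mu> w = 0" "1 < cmod z"
  shows "beurling_transform \<mu> z = of_real (- 1 / pi) * (\<integral>w. \<mu> w / (z - w)\<^sup>2 \<partial>lborel)"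
proof -
  have "(LINT w:{w. \<epsilon> < cmod (z - w)}|lborel. \<mu> w / (z - w)\<^sup>2) = (\<integral>w. \<mu> w / (z - w)\<^sup>2 \<partial>lborel)"
    if "\<epsilon> < cmod z - 1" for \<epsilon>
  proof -
    have "indicator {w. \<epsilon> < cmod (z - w)} w *\<^sub>R (\<mu> w / (z - w)\<^sup>2) = \<mu> w / (z - w)\<^sup>2" for w
    proof (cases "1 \<le> cmod w")
      case False
      then have "\<epsilon> < cmod (z - w)" using that norm_triangle_ineq2[of z w] by linarith
      then show ?thesis by simp
    qed (simp add: assms(1))
    then show ?thesis unfolding set_lebesgue_integral_def by simp
  qed
  then have "eventually (\<lambda>\<epsilon>. (LINT w:{w. \<epsilon> < cmod (z - w)}|lborel. \<mu> w / (z - w)\<^sup>2)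
      = (\<integral>w. \<mu> w / (z - w)\<^sup>2 \<partial>lborel)) (at_right 0)"
    using eventually_at_right_real[of 0 "cmod z - 1"] assms(2) by (auto elim!: eventually_mono)
  then show ?thesis
    unfolding beurling_transform_def by (subst tendsto_Lim[OF _ tendsto_eventually]) simp_all
qed

section \<open>The function \<open>v\<close>\<close>

lemma nseq_Suc: "nseq d (Suc j) = d * nseq d j"
  by (simp add: nseq_def)

lemma nseq_ge_index: "2 \<le> d \<Longrightarrow> j < nseq d j"
proof -
  assume "2 \<le> d"
  have "j < 2 ^ j" by (rule less_exp)
  also have "\<dots> \<le> d ^ j" using \<open>2 \<le> d\<close> by (rule power_mono) simp
  also have "\<dots> \<le> nseq d j" using \<open>2 \<le> d\<close> by (simp add: nseq_def)
  finally show ?thesis .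
qed

definition vfun_term :: "nat \<Rightarrow> nat \<Rightarrow> complex \<Rightarrow> complex" where
  "vfun_term d n z = - (z / of_nat d) * (inverse (z ^ nseq d n) / of_nat (d ^ n))"

definition vfun_term_deriv :: "nat \<Rightarrow> nat \<Rightarrow> complex \<Rightarrow> complex" where
  "vfun_term_deriv d n z = of_nat (nseq d n - 1) / of_nat (d ^ Suc n) * inverse (z ^ nseq d n)"

lemma norm_inverse_power_le:
  fixes z :: complex
  assumes "1 \<le> q" "q \<le> norm z" "n \<le> N"
  shows "norm (inverse (z ^ N)) \<le> (1 / q) ^ n"
proof -
  have "norm (inverse (z ^ N)) = (1 / norm z) ^ N"
    by (simp add: norm_inverse norm_power power_one_over inverse_eq_divide norm_divide)
  also have "\<dots> \<le> (1 / q) ^ N" using assms by (intro power_mono) (auto simp: divide_simps)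
  also have "\<dots> \<le> (1 / q) ^ n" using assms by (intro power_decreasing) auto
  finally show ?thesis .
qed

lemma vfun_sums:
  fixes z :: complex
  assumes "1 < norm z" "2 \<le> d"
  shows "(\<lambda>n. vfun_term d n z) sums vfun d z"
proof -
  have "norm (inverse (z ^ nseq d n) / of_nat (d ^ n)) \<le> (1 / real d) ^ n" for n
    using norm_inverse_power_le[of 1 z 0 "nseq d n"] assms
    by (simp add: norm_divide norm_power divide_right_mono power_one_over)
  then have "summable (\<lambda>n. inverse (z ^ nseq d n) / of_nat (d ^ n))"
    using assms by (intro summable_comparison_test'[OF summable_geometric, of "1 / real d" 0]) auto
  then show ?thesis
    unfolding vfun_def vfun_term_def[abs_def] nseq_def by (intro sums_mult summable_sums)
qed

lemma vfun_term_eq: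
  assumes "z \<noteq> 0" "2 \<le> d"
  shows "vfun_term d n z = - 1 / (of_nat d ^ Suc n * z ^ (nseq d n - 1))"
proof -
  have "z ^ nseq d n = z * z ^ (nseq d n - 1)"
    using nseq_ge_index[OF assms(2), of n] by (simp flip: power_Suc)
  then show ?thesis using assms by (simp add: vfun_term_def field_simps)
qed

lemma vfun_term_pow:
  assumes "1 \<le> d"
  shows "vfun_term d n (z ^ d) = of_nat d * z ^ (d - 1) * vfun_term d (Suc n) z"
proof -
  have "z ^ d = z * z ^ (d - 1)" using assms by (simp flip: power_Suc)
  moreover have "(z ^ d) ^ nseq d n = z ^ nseq d (Suc n)"
    by (simp add: nseq_Suc power_mult[symmetric] mult.commute)
  ultimately show ?thesis using assms by (simp add: vfun_term_def field_simps)
qed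

lemma vfun_pow:
  fixes z :: complex
  assumes "1 < norm z" "2 \<le> d"
  shows "vfun d (z ^ d) = of_nat d * z ^ (d - 1) * vfun d z + z"
proof -
  have "1 < norm (z ^ d)" using assms by (simp add: norm_power one_less_power)
  then have lhs: "(\<lambda>n. of_nat d * z ^ (d - 1) * vfun_term d (Suc n) z) sums vfun d (z ^ d)"
    using vfun_sums[of "z ^ d" d] assms by (simp add: vfun_term_pow)
  have rhs: "(\<lambda>n. of_nat d * z ^ (d - 1) * vfun_term d (Suc n) z)
      sums (of_nat d * z ^ (d - 1) * (vfun d z - vfun_term d 0 z))"
    using vfun_sums[OF assms] by (intro sums_mult) (simp add: sums_Suc_iff[where f = "\<lambda>n. vfun_term d n z"])
  have first_term: "- (of_nat d * z ^ (d - 1) * vfun_term d 0 z) = z"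
  proof -
    have "z ^ nseq d 0 = z ^ (d - 1)" by (simp add: nseq_def)
    then show ?thesis using assms by (auto simp: vfun_term_def field_simps)
  qed
  show ?thesis
    using sums_unique2[OF lhs rhs] first_term by (simp add: right_diff_distrib)
qed

lemma vfun_term_has_derivative:
  assumes "z \<noteq> 0" "2 \<le> d"
  shows "(vfun_term d n has_field_derivative vfun_term_deriv d n z) (at z)"
proof -
  define N where "N = nseq d n"
  define C :: complex where "C = - 1 / (of_nat d * of_nat (d ^ n))"
  have "1 \<le> N" using nseq_ge_index[OF assms(2), of n] by (simp add: N_def)
  have deriv: "((\<lambda>x. C * x powi (1 - int N)) has_field_derivative C * (of_int (1 - int N) * z powi (- int N)))
      (at z)"
    using assms by (auto intro!: derivative_eq_intros)
  have deriv_eq: "C * (of_int (1 - int N) * z powi (- int N)) = vfun_term_deriv d n z"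
  proof -
    have "(of_int (1 - int N) :: complex) = - of_nat (N - 1)"
      using \<open>1 \<le> N\<close> by (simp add: of_nat_diff)
    then show ?thesis
      by (simp add: C_def N_def vfun_term_deriv_def power_int_minus)
  qed
  have fun_eq: "C * x powi (1 - int N) = vfun_term d n x" if "x \<in> - {0}" for x
  proof -
    have "x powi (1 - int N) = x * inverse (x ^ N)"
      using that by (simp add: power_int_diff divide_inverse)
    then show ?thesis
      by (simp add: C_def N_def vfun_term_def divide_inverse mult_ac)
  qed
  show ?thesis
    using has_field_derivative_transform_within_open[OF deriv open_Compl[OF closed_singleton] _ fun_eq]
      assms(1) deriv_eq by simp
qed

lemma norm_vfun_term_deriv_le:
  assumes "2 \<le> d" "1 \<le> q" "q \<le> norm z"
  shows "norm (vfun_term_deriv d n z) \<le> (1 / q) ^ n"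
proof -
  have "nseq d n - 1 \<le> d * d ^ n"
    unfolding nseq_def by (rule order.trans[OF diff_le_self mult_right_mono]) simp_all
  then have "real (nseq d n - 1) \<le> real (d ^ Suc n)"
    by (simp only: power_Suc of_nat_le_iff)
  then have "norm (of_nat (nseq d n - 1) / of_nat (d ^ Suc n) :: complex) \<le> 1"
    using assms(1) by (simp add: norm_divide divide_le_eq_1 del: power_Suc of_nat_power)
  moreover have "norm (inverse (z ^ nseq d n)) \<le> (1 / q) ^ n"
    using assms nseq_ge_index[OF assms(1), of n] by (intro norm_inverse_power_le) auto
  ultimately have "norm (of_nat (nseq d n - 1) / of_nat (d ^ Suc n) :: complex) * norm (inverse (z ^ nseq d n))
      \<le> 1 * (1 / q) ^ n"
    by (intro mult_mono) auto
  then show ?thesis unfolding vfun_term_deriv_def norm_mult by simp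
qed

lemma vfun_has_derivative:
  assumes "1 < norm z" "2 \<le> d"
  shows "(vfun d has_field_derivative (\<Sum>n. vfun_term_deriv d n z)) (at z)"
proof -
  define q where "q = (norm z + 1) / 2"
  have "1 < q" "q < norm z" using assms(1) by (auto simp: q_def)
  define S where "S = ball z (norm z - q)"
  have q_le: "q \<le> norm x" if "x \<in> S" for x
    using that norm_triangle_ineq2[of z x] by (auto simp: S_def dist_norm norm_minus_commute)
  have "uniform_limit S (\<lambda>n x. \<Sum>i<n. vfun_term_deriv d i x) (\<lambda>x. \<Sum>i. vfun_term_deriv d i x) sequentially"
    using assms(2) q_le \<open>1 < q\<close>
    by (intro Weierstrass_m_test_ev[OF always_eventually summable_geometric[of "1 / q"]])
      (auto intro!: norm_vfun_term_deriv_le)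
  then have uniformly_convergent: "uniformly_convergent_on S (\<lambda>n x. \<Sum>i<n. vfun_term_deriv d i x)"
    unfolding uniformly_convergent_on_def by blast
  have "(vfun_term d n has_field_derivative vfun_term_deriv d n x) (at x within S)" if "x \<in> S" for n x
  proof (rule has_field_derivative_at_within[OF vfun_term_has_derivative[OF _ assms(2)]])
    show "x \<noteq> 0" using q_le[OF that] \<open>1 < q\<close> by auto
  qed
  moreover have "z \<in> S" "z \<in> interior S" using \<open>q < norm z\<close> by (simp_all add: S_def)
  moreover have "summable (\<lambda>n. vfun_term d n z)" using vfun_sums[OF assms] by (simp add: sums_iff)
  ultimately have "((\<lambda>x. \<Sum>n. vfun_term d n x) has_field_derivative (\<Sum>n. vfun_term_deriv d n z)) (at z)"
    by (intro has_field_derivative_series'(2)[OF convex_ball[of z "norm z - q", folded S_def] _ uniformly_convergent])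
  moreover have "open {x::complex. 1 < norm x}" by (intro open_Collect_less continuous_intros)
  moreover have "(\<Sum>n. vfun_term d n x) = vfun d x" if "x \<in> {x. 1 < norm x}" for x
    using vfun_sums[of x d] that assms(2) by (simp add: sums_iff)
  ultimately show ?thesis
    using has_field_derivative_transform_within_open assms(1) by blast
qed

lemma deriv_vfun_sums:
  assumes "1 < norm z" "2 \<le> d"
  shows "(\<lambda>n. vfun_term_deriv d n z) sums deriv (vfun d) z"
proof -
  have "summable (\<lambda>n. vfun_term_deriv d n z)"
    using assms
    by (intro summable_comparison_test'[OF summable_geometric[of "1 / norm z"], of 0] norm_vfun_term_deriv_le)
      (auto simp: divide_simps)
  then show ?thesis
    using DERIV_imp_deriv[OF vfun_has_derivative[OF assms]] by (simp add: summable_sums)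
qed

section \<open>The coefficient \<open>\<mu>\<close> and its transforms\<close>

lemma pullback_pow_factor:
  assumes "z \<noteq> 0" "1 \<le> d"
  shows "cnj (of_nat d * z ^ (d - 1)) / (of_nat d * z ^ (d - 1)) = (cnj z / of_real (cmod z)) ^ (2 * (d - 1))"
proof -
  have "of_real (cmod z) * of_real (cmod z) = z * cnj z"
    using complex_norm_square[of z] by (simp add: power2_eq_square)
  then have square: "cnj z / z = (cnj z / of_real (cmod z))\<^sup>2"
    using assms(1) by (simp add: power_divide power2_eq_square field_simps)
  have "cnj (of_nat d * z ^ (d - 1)) / (of_nat d * z ^ (d - 1)) = (cnj z / z) ^ (d - 1)"
    using assms by (simp add: power_divide)
  also have "\<dots> = (cnj z / of_real (cmod z)) ^ (2 * (d - 1))"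
    by (simp add: square power_mult)
  finally show ?thesis .
qed

locale lacunary_beltrami =
  fixes d :: nat and \<rho>0 :: real
  assumes d_ge_3: "3 \<le> d" and \<rho>0_pos: "0 < \<rho>0" and \<rho>0_less_1: "\<rho>0 < 1"
begin

abbreviation r :: "nat \<Rightarrow> real" where "r \<equiv> rseq d \<rho>0"

abbreviation shell :: "nat \<Rightarrow> complex set" where "shell j \<equiv> annulus (r j) (r (Suc j))"

lemma nseq_ge_2: "2 \<le> nseq d j"
proof -
  have "2 * 1 \<le> (d - 1) * d ^ j" using d_ge_3 by (intro mult_mono) auto
  then show ?thesis by (simp add: nseq_def)
qed

lemma real_nseq: "real (nseq d j) = (real d - 1) * real d ^ j"
  using d_ge_3 by (simp add: nseq_def of_nat_diff)

lemma r_pos: "0 < r j"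
  using \<rho>0_pos by (simp add: rseq_def)

lemma r_less_1: "r j < 1"
  using powr_less_mono'[OF \<rho>0_pos \<rho>0_less_1, of 0 "1 / real (nseq d j)"] nseq_ge_2[of j] \<rho>0_pos
  by (simp add: rseq_def)

lemma strict_mono_r: "strict_mono r"
proof (rule strict_mono_Suc_iff[THEN iffD2], intro allI)
  fix j
  have "1 / real (nseq d (Suc j)) < 1 / real (nseq d j)"
    using nseq_ge_2[of j] d_ge_3 by (simp add: nseq_Suc divide_simps)
  then show "r j < r (Suc j)"
    unfolding rseq_def by (rule powr_less_mono'[OF \<rho>0_pos \<rho>0_less_1])
qed

lemma r_power_nseq: "r j ^ nseq d j = \<rho>0"
  using \<rho>0_pos nseq_ge_2[of j] by (simp add: rseq_def powr_realpow[symmetric] powr_powr)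

lemma r_Suc_power_nseq: "r (Suc j) ^ nseq d j = \<rho>0 powr (1 / real d)"
  using \<rho>0_pos nseq_ge_2[of j] by (simp add: rseq_def powr_realpow[symmetric] powr_powr nseq_Suc)

lemma r_Suc_power_d: "r (Suc j) ^ d = r j"
  using \<rho>0_pos nseq_ge_2[of j] d_ge_3 by (simp add: rseq_def powr_realpow[symmetric] powr_powr nseq_Suc)

lemma shell_unique:
  assumes "w \<in> shell i" "w \<in> shell j"
  shows "i = j"
proof -
  have "\<not> i < j" if "w \<in> shell i" "w \<in> shell j" for i j
  proof
    assume "i < j"
    then have "r (Suc i) \<le> r j" using strict_mono_r by (simp add: strict_mono_less_eq)
    with that show False by (simp add: annulus_def)
  qed
  then show ?thesis using assms by (meson linorder_cases)
qed

lemma mu_eq_on_shell: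
  assumes "w \<in> shell j"
  shows "mu d \<rho>0 w = (cnj w / of_real (cmod w)) ^ (nseq d j - 2)"
proof -
  have "(THE j. r j < cmod w \<and> cmod w < r (Suc j)) = j"
    using assms shell_unique by (intro the_equality) (auto simp: annulus_def)
  then show ?thesis using assms by (auto simp: mu_def annulus_def)
qed

lemma mu_eq_0:
  assumes "\<And>j. w \<notin> shell j"
  shows "mu d \<rho>0 w = 0"
  using assms unfolding mu_def annulus_def by auto

lemma mu_eq_0_outside_disc:
  assumes "1 \<le> cmod w"
  shows "mu d \<rho>0 w = 0"
proof (rule mu_eq_0)
  fix j
  show "w \<notin> shell j" using assms r_less_1[of "Suc j"] by (simp add: annulus_def)
qed

lemma mu_eq_0_inside_r0:
  assumes "cmod w \<le> r 0"
  shows "mu d \<rho>0 w = 0"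
proof (rule mu_eq_0)
  fix j
  have "r 0 \<le> r j" using strict_mono_r by (simp add: strict_mono_less_eq)
  then show "w \<notin> shell j" using assms by (simp add: annulus_def)
qed

definition mu_piece :: "nat \<Rightarrow> complex \<Rightarrow> complex" where
  "mu_piece j = annular_monomial (r j) (r (Suc j)) (nseq d j - 2) 0"

lemma mu_piece_eq: "mu_piece j w = indicator (shell j) w * (cnj w / of_real (cmod w)) ^ (nseq d j - 2)"
  by (simp add: mu_piece_def annular_monomial_def)

lemma norm_mu_piece_le: "norm (mu_piece j w) \<le> indicator (shell j) w"
  using norm_annular_monomial_le[of "r (Suc j)" "r j" "nseq d j - 2" 0 w] r_pos[of "Suc j"]
  by (simp add: mu_piece_def)

lemma mu_piece_sums: "(\<lambda>j. mu_piece j w) sums mu d \<rho>0 w"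
proof (cases "\<exists>j. w \<in> shell j")
  case True
  then obtain j where "w \<in> shell j" by blast
  have "mu_piece i w = (if i = j then mu d \<rho>0 w else 0)" for i
  proof (cases "i = j")
    case True
    then show ?thesis using \<open>w \<in> shell j\<close> by (simp add: mu_piece_eq mu_eq_on_shell)
  next
    case False
    then have "w \<notin> shell i" using shell_unique \<open>w \<in> shell j\<close> by blast
    then show ?thesis using False by (simp add: mu_piece_eq)
  qed
  then show ?thesis using sums_single[of j "\<lambda>_. mu d \<rho>0 w"] by simp
next
  case False
  then show ?thesis by (simp add: mu_piece_eq mu_eq_0)
qed

lemma summable_measure_shell: "summable (\<lambda>j. measure lborel (shell j))"
proof (rule summableI_nonneg_bounded[where x = pi])
  have "r j \<le> r (Suc j)" for j using strict_mono_r by (simp add: strict_mono_less_eq)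
  then have measure_shell: "measure lborel (shell j) = pi * ((r (Suc j))\<^sup>2 - (r j)\<^sup>2)" for j
    using r_pos[of j] by (intro measure_annulus) auto
  fix n
  have "(\<Sum>j<n. measure lborel (shell j)) = pi * ((r n)\<^sup>2 - (r 0)\<^sup>2)"
    by (simp add: measure_shell sum_distrib_left[symmetric] sum_lessThan_telescope[where f = "\<lambda>j. (r j)\<^sup>2"])
  also have "\<dots> \<le> pi * 1"
  proof -
    have "(r n)\<^sup>2 \<le> 1" using r_less_1[of n] r_pos[of n] by (simp add: power_le_one)
    then have "(r n)\<^sup>2 - (r 0)\<^sup>2 \<le> 1" using zero_le_power2[of "r 0"] by linarith
    then show ?thesis by (intro mult_left_mono) auto
  qed
  finally show "(\<Sum>j<n. measure lborel (shell j)) \<le> pi" by simp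
qed simp

lemma mu_kernel_sums:
  fixes K :: "complex \<Rightarrow> complex"
  assumes [measurable]: "K \<in> borel_measurable borel"
    and K_bound: "\<And>w. norm w < 1 \<Longrightarrow> norm (K w) \<le> B"
  shows "(\<lambda>j. \<integral>w. mu_piece j w * K w \<partial>lborel) sums (\<integral>w. mu d \<rho>0 w * K w \<partial>lborel)"
proof -
  define f where "f j w = mu_piece j w * K w" for j w
  have measurable: "f j \<in> borel_measurable lborel" for j
    unfolding f_def[abs_def] mu_piece_def by measurable
  have bound: "norm (f j w) \<le> B * indicator (shell j) w" for j w
  proof (cases "w \<in> shell j")
    case True
    then have "norm w < 1" using r_less_1[of "Suc j"] by (simp add: annulus_def)
    then have "norm (mu_piece j w) * norm (K w) \<le> 1 * B"
      using True K_bound norm_mu_piece_le[of j w] by (intro mult_mono) auto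
    then show ?thesis using True by (simp add: f_def norm_mult)
  qed (simp add: f_def mu_piece_eq)
  have sums: "(\<lambda>j. f j w) sums (mu d \<rho>0 w * K w)" for w
    unfolding f_def by (rule sums_mult2[OF mu_piece_sums])
  have summable_norm: "summable (\<lambda>j. norm (f j w))" for w
  proof (cases "\<exists>j. w \<in> shell j")
    case True
    then obtain j where "w \<in> shell j" by blast
    have "w \<notin> shell i" if "i \<noteq> j" for i using that shell_unique \<open>w \<in> shell j\<close> by blast
    then have "(\<lambda>i. norm (f i w)) = (\<lambda>i. if i = j then norm (f j w) else 0)"
      by (auto simp: f_def mu_piece_eq)
    then show ?thesis using sums_summable[OF sums_single[of j "\<lambda>_. norm (f j w)"]] by simp
  qed (simp add: f_def mu_piece_eq)
  show ?thesis
    using sums_integral_sums_limit[OF measurable _ emeasure_annulus_finite bound sums summable_norm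
        summable_mult[OF summable_measure_shell]]
    by (simp add: f_def)
qed

definition \<kappa> :: real where
  "\<kappa> = (2 * real d / (real d - 1)) * (\<rho>0 powr (1 / real d) - \<rho>0)"

lemma shell_moment:
  "2 * pi * (r (Suc j) ^ ((nseq d j - 2) + 2) - r j ^ ((nseq d j - 2) + 2)) / real ((nseq d j - 2) + 2)
    = pi * \<kappa> / real d ^ Suc j"
proof -
  have "(nseq d j - 2) + 2 = nseq d j" using nseq_ge_2[of j] by simp
  then have "2 * pi * (r (Suc j) ^ ((nseq d j - 2) + 2) - r j ^ ((nseq d j - 2) + 2)) / real ((nseq d j - 2) + 2)
      = 2 * pi * (\<rho>0 powr (1 / real d) - \<rho>0) / ((real d - 1) * real d ^ j)"
    by (simp add: r_power_nseq r_Suc_power_nseq real_nseq)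
  also have "\<dots> = pi * \<kappa> / real d ^ Suc j"
    using d_ge_3 by (simp add: \<kappa>_def field_simps)
  finally show ?thesis .
qed

lemma integral_mu_piece_cauchy_kernel:
  assumes "1 < norm z"
  shows "(\<integral>w. mu_piece j w / (z - w) \<partial>lborel) = of_real (pi * \<kappa> / real d ^ Suc j) / z ^ (nseq d j - 1)"
proof -
  have "0 \<le> r j" "r j \<le> r (Suc j)" "r (Suc j) < norm z"
    using r_pos[of j] strict_mono_r r_less_1[of "Suc j"] assms
    by (auto simp: strict_mono_less_eq)
  then have "has_bochner_integral lborel (\<lambda>w. mu_piece j w * (1 / (z - w)))
      (1 / z ^ Suc (nseq d j - 2) * of_real (pi * \<kappa> / real d ^ Suc j))"
    unfolding mu_piece_eq shell_moment[symmetric]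
    by (intro has_bochner_integral_annulus_power_series cauchy_kernel_sums summable_cauchy_kernel_coeffs)
      auto
  moreover have "Suc (nseq d j - 2) = nseq d j - 1" using nseq_ge_2[of j] by simp
  ultimately show ?thesis by (simp add: has_bochner_integral_iff)
qed

lemma integral_mu_piece_beurling_kernel:
  assumes "1 < norm z"
  shows "(\<integral>w. mu_piece j w / (z - w)\<^sup>2 \<partial>lborel)
    = of_real (pi * \<kappa> / real d ^ Suc j) * of_nat (nseq d j - 1) / z ^ nseq d j"
proof -
  have "0 \<le> r j" "r j \<le> r (Suc j)" "r (Suc j) < norm z"
    using r_pos[of j] strict_mono_r r_less_1[of "Suc j"] assms
    by (auto simp: strict_mono_less_eq)
  then have "has_bochner_integral lborel (\<lambda>w. mu_piece j w * (1 / (z - w)\<^sup>2))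
      (of_nat (Suc (nseq d j - 2)) / z ^ ((nseq d j - 2) + 2) * of_real (pi * \<kappa> / real d ^ Suc j))"
    unfolding mu_piece_eq shell_moment[symmetric]
    by (intro has_bochner_integral_annulus_power_series beurling_kernel_sums summable_beurling_kernel_coeffs)
      auto
  moreover have "Suc (nseq d j - 2) = nseq d j - 1" "(nseq d j - 2) + 2 = nseq d j"
    using nseq_ge_2[of j] by simp_all
  ultimately show ?thesis by (simp add: has_bochner_integral_iff ac_simps)
qed

lemma cauchy_transform_mu_sums:
  assumes "1 < norm z"
  shows "(\<lambda>j. of_real (\<kappa> / real d ^ Suc j) / z ^ (nseq d j - 1)) sums cauchy_transform (mu d \<rho>0) z"
proof -
  have [measurable]: "(\<lambda>w. 1 / (z - w)) \<in> borel_measurable borel" by measurable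
  have "(\<lambda>j. \<integral>w. mu_piece j w * (1 / (z - w)) \<partial>lborel) sums (\<integral>w. mu d \<rho>0 w * (1 / (z - w)) \<partial>lborel)"
    using norm_cauchy_kernel_le assms by (intro mu_kernel_sums) auto
  from sums_mult[OF this, of "of_real (1 / pi)"] show ?thesis
    by (simp add: integral_mu_piece_cauchy_kernel[OF assms] cauchy_transform_def)
qed

lemma beurling_transform_mu_sums:
  assumes "1 < norm z"
  shows "(\<lambda>j. - of_real (\<kappa> / real d ^ Suc j) * of_nat (nseq d j - 1) / z ^ nseq d j)
    sums beurling_transform (mu d \<rho>0) z"
proof -
  have [measurable]: "(\<lambda>w. 1 / (z - w)\<^sup>2) \<in> borel_measurable borel" by measurable
  have "norm (1 / (z - w)\<^sup>2) \<le> (1 / (norm z - 1))\<^sup>2" if "norm w < 1" for w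
  proof -
    have "(norm (1 / (z - w)))\<^sup>2 \<le> (1 / (norm z - 1))\<^sup>2"
      using norm_cauchy_kernel_le[OF that assms] by (intro power_mono) auto
    then show ?thesis by (simp add: norm_divide norm_power power_one_over)
  qed
  then have "(\<lambda>j. \<integral>w. mu_piece j w * (1 / (z - w)\<^sup>2) \<partial>lborel)
      sums (\<integral>w. mu d \<rho>0 w * (1 / (z - w)\<^sup>2) \<partial>lborel)"
    by (intro mu_kernel_sums) auto
  from sums_mult[OF this, of "of_real (- 1 / pi)"] show ?thesis
    using mu_eq_0_outside_disc
    by (simp add: integral_mu_piece_beurling_kernel[OF assms] beurling_transform_eq_integral[OF _ assms])
qed

lemma cauchy_transform_mu:
  assumes "1 < norm z"
  shows "cauchy_transform (mu d \<rho>0) z = - of_real \<kappa> * vfun d z"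
proof -
  have "z \<noteq> 0" using assms by auto
  have "(\<lambda>j. - of_real \<kappa> * vfun_term d j z) sums (- of_real \<kappa> * vfun d z)"
    using d_ge_3 by (intro sums_mult vfun_sums assms) auto
  moreover have "- of_real \<kappa> * vfun_term d j z = of_real (\<kappa> / real d ^ Suc j) / z ^ (nseq d j - 1)" for j
    using \<open>z \<noteq> 0\<close> d_ge_3 by (simp add: vfun_term_eq)
  ultimately show ?thesis using cauchy_transform_mu_sums[OF assms] by (simp add: sums_unique2)
qed

lemma beurling_transform_mu:
  assumes "1 < norm z"
  shows "beurling_transform (mu d \<rho>0) z = - of_real \<kappa> * deriv (vfun d) z"
proof -
  have "(\<lambda>j. - of_real \<kappa> * vfun_term_deriv d j z) sums (- of_real \<kappa> * deriv (vfun d) z)"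
    using d_ge_3 by (intro sums_mult deriv_vfun_sums assms) auto
  moreover have "- of_real \<kappa> * vfun_term_deriv d j z
      = - of_real (\<kappa> / real d ^ Suc j) * of_nat (nseq d j - 1) / z ^ nseq d j" for j
    by (simp add: vfun_term_deriv_def divide_inverse)
  ultimately show ?thesis using beurling_transform_mu_sums[OF assms] by (simp add: sums_unique2)
qed

lemma cauchy_transform_mu_pow:
  assumes "1 < norm z"
  shows "cauchy_transform (mu d \<rho>0) (z ^ d) = of_nat d * z ^ (d - 1) * cauchy_transform (mu d \<rho>0) z - of_real \<kappa> * z"
proof -
  have "1 < norm (z ^ d)" using assms d_ge_3 by (simp add: norm_power one_less_power)
  then show ?thesis
    using d_ge_3 by (simp add: cauchy_transform_mu assms vfun_pow algebra_simps)
qed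

lemma power_d_in_shell_iff: "z ^ d \<in> shell i \<longleftrightarrow> z \<in> shell (Suc i)"
proof -
  have less_iff: "x ^ d < y ^ d \<longleftrightarrow> x < y" if "0 \<le> x" "0 \<le> y" for x y :: real
    using power_mono_iff[of y x d] that d_ge_3 by (simp add: not_le[symmetric])
  have "z ^ d \<in> shell i \<longleftrightarrow> r (Suc i) ^ d < cmod z ^ d \<and> cmod z ^ d < r (Suc (Suc i)) ^ d"
    by (simp add: annulus_def norm_power r_Suc_power_d)
  also have "\<dots> \<longleftrightarrow> z \<in> shell (Suc i)"
    using less_iff r_pos by (simp add: annulus_def less_imp_le)
  finally show ?thesis .
qed

lemma mu_pullback_pow:
  "mu d \<rho>0 z = pullback_pow d (mu d \<rho>0) z + mu d \<rho>0 z * indicator (shell 0) z"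
proof (cases "\<exists>j. z \<in> shell j")
  case True
  then obtain j where "z \<in> shell j" by blast
  show ?thesis
  proof (cases j)
    case 0
    have "cmod (z ^ d) < r 1 ^ d"
      using \<open>z \<in> shell j\<close> 0 d_ge_3 by (simp add: annulus_def norm_power power_strict_mono)
    then have "mu d \<rho>0 (z ^ d) = 0" by (intro mu_eq_0_inside_r0) (simp add: r_Suc_power_d)
    then show ?thesis using \<open>z \<in> shell j\<close> 0 by (simp add: pullback_pow_def)
  next
    case (Suc i)
    define u where "u = cnj z / of_real (cmod z)"
    have "z \<noteq> 0" using \<open>z \<in> shell j\<close> r_pos[of j] by (auto simp: annulus_def)
    have "z \<notin> shell 0" using shell_unique \<open>z \<in> shell j\<close> Suc by blast
    have "mu d \<rho>0 (z ^ d) = (u ^ d) ^ (nseq d i - 2)"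
      using mu_eq_on_shell[of "z ^ d" i] \<open>z \<in> shell j\<close> Suc
      by (simp add: power_d_in_shell_iff u_def norm_power power_divide)
    then have "pullback_pow d (mu d \<rho>0) z = u ^ (d * (nseq d i - 2) + 2 * (d - 1))"
      using pullback_pow_factor[OF \<open>z \<noteq> 0\<close>] d_ge_3
      by (simp add: pullback_pow_def u_def power_add power_mult flip: times_divide_eq_right)
    also have "d * (nseq d i - 2) + 2 * (d - 1) = nseq d j - 2"
      using nseq_ge_2[of i] d_ge_3 by (simp add: Suc nseq_Suc diff_mult_distrib2)
    finally show ?thesis
      using \<open>z \<notin> shell 0\<close> mu_eq_on_shell[OF \<open>z \<in> shell j\<close>] by (simp add: u_def)
  qed
next
  case False
  then have "mu d \<rho>0 (z ^ d) = 0" "mu d \<rho>0 z = 0"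
    by (simp_all add: mu_eq_0 power_d_in_shell_iff)
  then show ?thesis by (simp add: pullback_pow_def)
qed

end

theorem lemma5p4:
  fixes d :: nat and \<rho>0 :: real
  assumes "d \<ge> 3" and "0 < \<rho>0" and "\<rho>0 < 1"
  defines "c \<equiv> (2 * real d / (real d - 1)) * (\<rho>0 powr (1 / real d) - \<rho>0)"
  shows "(\<forall>z. mu d \<rho>0 z = pullback_pow d (mu d \<rho>0) z
                + mu d \<rho>0 z * indicator (annulus (rseq d \<rho>0 0) (rseq d \<rho>0 1)) z)
    \<and> (\<forall>z. 1 < cmod z \<longrightarrow>
          cauchy_transform (mu d \<rho>0) (z ^ d)
            = of_nat d * z ^ (d - 1) * cauchy_transform (mu d \<rho>0) z - of_real c * z)
    \<and> (\<forall>z. 1 < cmod z \<longrightarrow> cauchy_transform (mu d \<rho>0) z = - of_real c * vfun d z)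
    \<and> (\<forall>z. 1 < cmod z \<longrightarrow> beurling_transform (mu d \<rho>0) z = - of_real c * deriv (vfun d) z)"
proof -
  interpret lacunary_beltrami d \<rho>0
    using assms(1-3) by unfold_locales
  have "c = \<kappa>" by (simp add: c_def \<kappa>_def)
  then show ?thesis
    using mu_pullback_pow cauchy_transform_mu_pow cauchy_transform_mu beurling_transform_mu by simp
qed

end
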